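(* Let $\delta\in(0,1/2)$ and $x\in\overline{\mathbb{D}}_{1-\delta}$. Then $x$ can be mapped to any other point of $\overline{\mathbb{D}}_{1-\delta}$ by a $K$-quasiconformal homeomorphism of $\overline{\mathbb{D}}$ equal to the identity on $\partial\mathbb{D}$ with $K=O((\log\delta)^2)$, with a universal implicit constant.
   Context: $\mathbb{D}_r$ denotes the open disk of radius $r$ centered at $0$, $\mathbb{D}=\mathbb{D}_1$. *)

theory Defs
  imports "HOL-Analysis.Analysis"
begin

text \<open>Quasiconformality is given by the standard analytic definition:
  a homeomorphism in the Sobolev class \<open>W^{1,2}_loc\<close> whose weak complex
  derivatives satisfy the Beltrami inequality
  \<open>|f_zbar| \<le> k |f_z|\<close> a.e., with \<open>k = (K-1)/(K+1)\<close>.\<close>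

definition dx :: "(complex \<Rightarrow> real) \<Rightarrow> complex \<Rightarrow> real" where
  "dx \<phi> z = frechet_derivative \<phi> (at z) 1"

definition dy :: "(complex \<Rightarrow> real) \<Rightarrow> complex \<Rightarrow> real" where
  "dy \<phi> z = frechet_derivative \<phi> (at z) \<i>"

definition test_fun :: "complex set \<Rightarrow> (complex \<Rightarrow> real) \<Rightarrow> bool" where
  "test_fun U \<phi> \<longleftrightarrow>
     (\<forall>z. \<phi> differentiable (at z)) \<and>
     continuous_on UNIV (dx \<phi>) \<and> continuous_on UNIV (dy \<phi>) \<and>
     compact (closure {z. \<phi> z \<noteq> 0}) \<and> closure {z. \<phi> z \<noteq> 0} \<subseteq> U"

definition L2_loc :: "complex set \<Rightarrow> (complex \<Rightarrow> complex) \<Rightarrow> bool" where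
  "L2_loc U g \<longleftrightarrow> set_borel_measurable lborel U g \<and>
     (\<forall>C. compact C \<and> C \<subseteq> U \<longrightarrow> set_integrable lborel C (\<lambda>z. (cmod (g z))\<^sup>2))"

definition weak_partials ::
  "complex set \<Rightarrow> (complex \<Rightarrow> complex) \<Rightarrow> (complex \<Rightarrow> complex) \<Rightarrow> (complex \<Rightarrow> complex) \<Rightarrow> bool" where
  "weak_partials U f gx gy \<longleftrightarrow>
     (\<forall>\<phi>. test_fun U \<phi> \<longrightarrow>
        (LINT z:U|lborel. of_real (dx \<phi> z) * f z) = - (LINT z:U|lborel. of_real (\<phi> z) * gx z) \<and>
        (LINT z:U|lborel. of_real (dy \<phi> z) * f z) = - (LINT z:U|lborel. of_real (\<phi> z) * gy z))"

definition quasiconformal_on :: "real \<Rightarrow> complex set \<Rightarrow> (complex \<Rightarrow> complex) \<Rightarrow> bool" where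
  "quasiconformal_on K U f \<longleftrightarrow>
     1 \<le> K \<and> open U \<and> (\<exists>g. homeomorphism U (f ` U) f g) \<and>
     L2_loc U f \<and>
     (\<exists>gx gy. weak_partials U f gx gy \<and> L2_loc U gx \<and> L2_loc U gy \<and>
        (AE z in lborel. z \<in> U \<longrightarrow>
           cmod ((gx z + \<i> * gy z) / 2) \<le> (K - 1) / (K + 1) * cmod ((gx z - \<i> * gy z) / 2)))"

end

theory Submission
  imports Defs
begin

text \<open>A disc automorphism \<open>A\<close> sends \<open>x\<close> to \<open>0\<close> and \<open>y\<close> to a point \<open>t \<in> [0, 1[\<close>;
  when \<open>\<bar>x\<bar>, \<bar>y\<bar> \<le> 1 - \<delta>\<close> one has \<open>1 - t\<^sup>2 \<ge> \<delta>\<^sup>2 / 4\<close>. Let \<open>\<omega> z\<close> be \<open>sech\<^sup>2\<close> of the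
  hyperbolic distance from \<open>z\<close> to the diameter \<open>]-1, 1[\<close>. The shear \<open>S\<^sub>D\<close> translates each
  \<open>z\<close> along that diameter by the hyperbolic length \<open>D \<omega>(z)\<close>: it is the identity on the circle,
  sends \<open>0\<close> to \<open>tanh (D / 2)\<close>, and an explicit computation of its Wirtinger derivatives
  shows that it is \<open>(3 + D\<^sup>2)\<close>-quasiconformal. With \<open>D = 2 artanh t = O(\<bar>log \<delta>\<bar>)\<close>, the
  conjugate \<open>A\<^sup>-\<^sup>1 \<circ> S\<^sub>D \<circ> A\<close> fixes the circle, maps \<open>x\<close> to \<open>y\<close>, and is
  \<open>K\<close>-quasiconformal with \<open>K \<le> 48 (log \<delta>)\<^sup>2\<close>. The weak derivatives required by
  \<open>quasiconformal_on\<close> are obtained from the classical ones by integrating by parts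
  against test functions.\<close>

section \<open>Quasiconformality of continuously differentiable maps\<close>

lemma set_integrable_compact_support:
  fixes g :: "'a::euclidean_space \<Rightarrow> 'b::{banach, second_countable_topology}"
  assumes "compact S" "S \<subseteq> U" "continuous_on S g" "\<And>z. z \<in> U \<Longrightarrow> z \<notin> S \<Longrightarrow> g z = 0"
  shows "set_integrable lborel U g"
proof -
  have "(\<lambda>z. indicator U z *\<^sub>R g z) = (\<lambda>z. indicator S z *\<^sub>R g z)"
    using assms(2,4) by (auto simp: fun_eq_iff indicator_def)
  then show ?thesis
    unfolding set_integrable_def using borel_integrable_compact[OF assms(1,3)] by simp
qed

lemma lborel_integral_translate:
  fixes f :: "'a::euclidean_space \<Rightarrow> 'b::{banach, second_countable_topology}"
  assumes f: "integrable lborel f"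
  shows "integrable lborel (\<lambda>z. f (c + z))" "integral\<^sup>L lborel (\<lambda>z. f (c + z)) = integral\<^sup>L lborel f"
proof -
  have meas: "f \<in> borel_measurable borel"
    using borel_measurable_integrable[OF f] by simp
  show "integrable lborel (\<lambda>z. f (c + z))"
    using f by (subst (asm) lborel_distr_plus[symmetric, of c]) (simp add: integrable_distr_eq meas)
  have "integral\<^sup>L lborel f = integral\<^sup>L (distr lborel borel ((+) c)) f"
    by (simp add: lborel_distr_plus)
  also have "\<dots> = integral\<^sup>L lborel (\<lambda>z. f (c + z))"
    by (rule integral_distr) (auto simp: meas)
  finally show "integral\<^sup>L lborel (\<lambda>z. f (c + z)) = integral\<^sup>L lborel f" by simp
qed

lemma difference_quotient_LIMSEQ:
  fixes f :: "'a::real_normed_vector \<Rightarrow> 'b::real_normed_vector"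
  assumes der: "(f has_derivative f') (at z)" and h: "h \<longlonglongrightarrow> 0" "\<And>n. h n \<noteq> 0"
  shows "(\<lambda>n. inverse (h n) *\<^sub>R (f (z + h n *\<^sub>R v) - f z)) \<longlonglongrightarrow> f' v"
proof -
  define g where "g t = f (z + t *\<^sub>R v)" for t :: real
  have line: "((\<lambda>t. z + t *\<^sub>R v) has_derivative (\<lambda>t. t *\<^sub>R v)) (at 0)"
    by (auto intro!: derivative_eq_intros)
  have "(g has_derivative (\<lambda>t. f' (t *\<^sub>R v))) (at 0)"
    unfolding g_def using has_derivative_compose[OF line, of f f'] der by simp
  then have "((\<lambda>t. norm (g t - g 0 - f' (t *\<^sub>R v)) / norm t) \<longlongrightarrow> 0) (at 0)"
    unfolding has_derivative_at by simp
  moreover have "filterlim h (at 0) sequentially"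
    using h by (auto simp: filterlim_at intro!: always_eventually)
  ultimately have "(\<lambda>n. norm (g (h n) - g 0 - f' (h n *\<^sub>R v)) / norm (h n)) \<longlonglongrightarrow> 0"
    by (rule filterlim_compose[of "\<lambda>t. norm (g t - g 0 - f' (t *\<^sub>R v)) / norm t"])
  moreover have "norm (g (h n) - g 0 - f' (h n *\<^sub>R v)) / norm (h n)
      = norm (inverse (h n) *\<^sub>R (f (z + h n *\<^sub>R v) - f z) - f' v)" for n
  proof -
    have "f' (h n *\<^sub>R v) = h n *\<^sub>R f' v"
      using linear_scale[OF has_derivative_linear[OF der]] .
    then have "g (h n) - g 0 - f' (h n *\<^sub>R v) = h n *\<^sub>R (inverse (h n) *\<^sub>R (f (z + h n *\<^sub>R v) - f z) - f' v)"
      using h(2)[of n] by (simp add: g_def algebra_simps)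
    then show ?thesis using h(2)[of n] by simp
  qed
  ultimately show ?thesis
    by (simp add: tendsto_norm_zero_iff LIM_zero_iff)
qed

lemma norm_difference_le_directional_bound:
  fixes f :: "'a::real_normed_vector \<Rightarrow> 'b::real_inner"
  assumes der: "\<And>w. (f has_derivative f' w) (at w)" and t: "0 < t"
    and M: "\<And>s. s \<in> {0..t} \<Longrightarrow> norm (f' (z + s *\<^sub>R v) v) \<le> M"
  shows "norm (f (z + t *\<^sub>R v) - f z) \<le> t * M"
proof -
  define g where "g s = f (z + s *\<^sub>R v)" for s :: real
  have gder: "(g has_derivative (\<lambda>s. f' (z + x *\<^sub>R v) (s *\<^sub>R v))) (at x)" for x
    unfolding g_def by (rule has_derivative_compose[OF _ der]) (auto intro!: derivative_eq_intros)
  have "continuous_on {0..t} g"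
    using gder by (meson continuous_at_imp_continuous_on has_derivative_continuous)
  then obtain s where s: "s \<in> {0<..<t}" "norm (g t - g 0) \<le> norm (f' (z + s *\<^sub>R v) ((t - 0) *\<^sub>R v))"
    using mvt_general[OF t _ gder] by blast
  note s(2)
  also have "f' (z + s *\<^sub>R v) ((t - 0) *\<^sub>R v) = t *\<^sub>R f' (z + s *\<^sub>R v) v"
    using linear_scale[OF has_derivative_linear[OF der]] by simp
  finally show ?thesis
    using M[of s] s t by (auto simp: g_def intro: order_trans mult_left_mono)
qed

lemma difference_quotient_dominated:
  fixes \<psi> :: "'a::euclidean_space \<Rightarrow> 'b::real_inner"
  assumes der: "\<And>z. (\<psi> has_derivative D\<psi> z) (at z)"
    and cont: "continuous_on UNIV (\<lambda>z. D\<psi> z v)"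
    and S: "compact S" and supp: "\<And>z. z \<notin> S \<Longrightarrow> \<psi> z = 0"
  obtains R M where "\<And>t z. 0 < t \<Longrightarrow> t \<le> 1 \<Longrightarrow>
    norm (inverse t *\<^sub>R (\<psi> (z + t *\<^sub>R v) - \<psi> z)) \<le> indicator (cball 0 R) z * M"
proof -
  obtain R where R: "\<And>z. z \<in> S \<Longrightarrow> norm z \<le> R"
    using compact_imp_bounded[OF S] unfolding bounded_iff by blast
  have "compact ((\<lambda>w. D\<psi> w v) ` cball 0 (R + 2 * norm v))"
    by (rule compact_continuous_image[OF continuous_on_subset[OF cont subset_UNIV] compact_cball])
  then obtain M where "\<forall>y \<in> (\<lambda>w. D\<psi> w v) ` cball 0 (R + 2 * norm v). norm y \<le> M"
    by (meson bounded_iff compact_imp_bounded)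
  then have M: "\<And>w. w \<in> cball 0 (R + 2 * norm v) \<Longrightarrow> norm (D\<psi> w v) \<le> M"
    by blast
  have "norm (inverse t *\<^sub>R (\<psi> (z + t *\<^sub>R v) - \<psi> z)) \<le> indicator (cball 0 (R + norm v)) z * M"
    if t: "0 < t" "t \<le> 1" for t z
  proof (cases "norm z \<le> R + norm v")
    case True
    have "norm (\<psi> (z + t *\<^sub>R v) - \<psi> z) \<le> t * M"
    proof (rule norm_difference_le_directional_bound[OF der t(1)])
      fix s assume "s \<in> {0..t}"
      then have "norm (s *\<^sub>R v) \<le> norm v"
        using t by (auto intro: mult_left_le_one_le)
      then show "norm (D\<psi> (z + s *\<^sub>R v) v) \<le> M"
        using True norm_triangle_ineq[of z "s *\<^sub>R v"] by (intro M) auto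
    qed
    then show ?thesis
      using True t by (simp add: inverse_eq_divide pos_divide_le_eq mult.commute)
  next
    case False
    have "norm (t *\<^sub>R v) \<le> norm v"
      using t by (auto intro: mult_left_le_one_le)
    moreover have "norm z - norm (t *\<^sub>R v) \<le> norm (z + t *\<^sub>R v)"
      using norm_triangle_ineq2[of z "- (t *\<^sub>R v)"] by simp
    ultimately have "R < norm z" "R < norm (z + t *\<^sub>R v)"
      using False norm_ge_zero[of v] by linarith+
    then have "z \<notin> S" "z + t *\<^sub>R v \<notin> S"
      using R by (meson not_le)+
    then show ?thesis
      using False by (simp add: supp)
  qed
  then show ?thesis
    using that by blast
qed

lemma integral_directional_derivative_eq_0:
  fixes \<psi> :: "'a::euclidean_space \<Rightarrow> 'b::euclidean_space"
  assumes der: "\<And>z. (\<psi> has_derivative D\<psi> z) (at z)"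
    and cont: "continuous_on UNIV (\<lambda>z. D\<psi> z v)"
    and S: "compact S" and supp: "\<And>z. z \<notin> S \<Longrightarrow> \<psi> z = 0"
  shows "integral\<^sup>L lborel (\<lambda>z. D\<psi> z v) = 0"
proof -
  obtain R M where bound: "\<And>t z. 0 < t \<Longrightarrow> t \<le> 1 \<Longrightarrow>
      norm (inverse t *\<^sub>R (\<psi> (z + t *\<^sub>R v) - \<psi> z)) \<le> indicator (cball 0 R) z * M"
    using difference_quotient_dominated[OF der cont S supp] by blast
  have cont\<psi>: "continuous_on UNIV \<psi>"
    using der has_derivative_continuous continuous_at_imp_continuous_on by blast
  have int\<psi>: "integrable lborel \<psi>"
    using set_integrable_compact_support[OF S subset_UNIV continuous_on_subset[OF cont\<psi>]] supp
    by (simp add: set_integrable_def)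
  define h where "h n = 1 / real (Suc n)" for n
  define q where "q n z = inverse (h n) *\<^sub>R (\<psi> (z + h n *\<^sub>R v) - \<psi> z)" for n z
  have int_q: "integral\<^sup>L lborel (q n) = 0" for n
    using lborel_integral_translate[OF int\<psi>, of "h n *\<^sub>R v"] int\<psi>
    by (simp add: q_def[abs_def] add.commute)
  have "h \<longlonglongrightarrow> 0"
    unfolding h_def using LIMSEQ_inverse_real_of_nat by (simp add: divide_inverse)
  then have q_lim: "(\<lambda>n. q n z) \<longlonglongrightarrow> D\<psi> z v" for z
    unfolding q_def by (rule difference_quotient_LIMSEQ[OF der]) (simp add: h_def)
  have dom: "integrable lborel (\<lambda>z. indicator (cball 0 R) z * M)"
    using borel_integrable_compact[of "cball 0 R" "\<lambda>_. M"] by simp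
  have "(\<lambda>n. integral\<^sup>L lborel (q n)) \<longlonglongrightarrow> integral\<^sup>L lborel (\<lambda>z. D\<psi> z v)"
  proof (rule integral_dominated_convergence[OF _ _ dom])
    show "(\<lambda>z. D\<psi> z v) \<in> borel_measurable lborel"
      using borel_measurable_continuous_onI[OF cont] by simp
    show "q n \<in> borel_measurable lborel" for n
      unfolding q_def using borel_measurable_continuous_onI[OF cont\<psi>] by simp
    show "AE z in lborel. norm (q n z) \<le> indicator (cball 0 R) z * M" for n
      using bound[of "h n"] by (simp add: q_def h_def)
  qed (use q_lim in auto)
  then show ?thesis
    using int_q by (simp add: LIMSEQ_const_iff)
qed

lemma L2_loc_continuous_on:
  assumes "open U" and "continuous_on U g"
  shows "L2_loc U g"
  unfolding L2_loc_def set_borel_measurable_def set_integrable_def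
proof (intro conjI allI impI)
  show "(\<lambda>z. indicator U z *\<^sub>R g z) \<in> borel_measurable lborel"
    using borel_measurable_continuous_on_indicator[OF borel_open] assms by simp
  fix C assume "compact C \<and> C \<subseteq> U"
  then show "integrable lborel (\<lambda>z. indicator C z *\<^sub>R (cmod (g z))\<^sup>2)"
    by (intro borel_integrable_compact)
      (auto intro!: continuous_intros intro: continuous_on_subset[OF assms(2)])
qed

lemma test_fun_vanishes_outside_support:
  assumes "test_fun U \<phi>" and "z \<notin> closure {z. \<phi> z \<noteq> 0}"
  shows "\<phi> z = 0" and "frechet_derivative \<phi> (at z) = (\<lambda>h. 0)"
proof -
  let ?S = "closure {z. \<phi> z \<noteq> 0}"
  have zero: "\<phi> w = 0" if "w \<notin> ?S" for w
    using that closure_subset[of "{z. \<phi> z \<noteq> 0}"] by blast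
  then show "\<phi> z = 0" using assms(2) .
  have "(\<phi> has_derivative (\<lambda>h. 0)) (at z)"
  proof (rule has_derivative_transform_within_open[OF has_derivative_const[of 0]])
    show "open (- ?S)" "z \<in> - ?S"
      using assms(2) by auto
    show "0 = \<phi> w" if "w \<in> - ?S" for w
      by (rule zero[symmetric]) (use that in simp)
  qed
  then show "frechet_derivative \<phi> (at z) = (\<lambda>h. 0)"
    by (rule frechet_derivative_at[symmetric])
qed

lemma has_derivative_test_fun_mult:
  fixes f :: "complex \<Rightarrow> complex"
  assumes U: "open U" and \<phi>: "test_fun U \<phi>"
    and f: "\<And>z. z \<in> U \<Longrightarrow> (f has_derivative Df z) (at z)"
  shows "((\<lambda>z. of_real (\<phi> z) * f z) has_derivative
           (\<lambda>h. if z \<in> U then of_real (frechet_derivative \<phi> (at z) h) * f z + of_real (\<phi> z) * Df z h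
                else 0)) (at z)"
proof (cases "z \<in> U")
  case True
  have "(\<phi> has_derivative frechet_derivative \<phi> (at z)) (at z)"
    using \<phi> frechet_derivative_works unfolding test_fun_def by blast
  from has_derivative_mult[OF has_derivative_of_real[OF this] f[OF True]] True show ?thesis
    by (simp add: algebra_simps)
next
  case False
  let ?S = "closure {z. \<phi> z \<noteq> 0}"
  have "?S \<subseteq> U"
    using \<phi> unfolding test_fun_def by auto
  have "((\<lambda>z. of_real (\<phi> z) * f z) has_derivative (\<lambda>h. 0)) (at z)"
  proof (rule has_derivative_transform_within_open[OF has_derivative_const[of 0]])
    show "open (- ?S)" "z \<in> - ?S"
      using False \<open>?S \<subseteq> U\<close> by auto
    show "0 = of_real (\<phi> w) * f w" if "w \<in> - ?S" for w
      using test_fun_vanishes_outside_support(1)[OF \<phi>, of w] that by simp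
  qed
  with False show ?thesis by simp
qed

lemma continuous_on_test_fun_mult_derivative:
  fixes f :: "complex \<Rightarrow> complex"
  assumes U: "open U" and \<phi>: "test_fun U \<phi>" and cont_f: "continuous_on U f"
    and cont_Df: "continuous_on U (\<lambda>z. Df z v)"
    and cont_d\<phi>: "continuous_on UNIV (\<lambda>z. frechet_derivative \<phi> (at z) v)"
  shows "continuous_on UNIV
           (\<lambda>z. if z \<in> U then of_real (frechet_derivative \<phi> (at z) v) * f z + of_real (\<phi> z) * Df z v else 0)"
proof -
  define S where "S = closure {z. \<phi> z \<noteq> 0}"
  have S: "closed S" "S \<subseteq> U"
    using \<phi> unfolding test_fun_def S_def by auto
  have cont_\<phi>: "continuous_on UNIV \<phi>"
    using \<phi> differentiable_imp_continuous_within continuous_at_imp_continuous_on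
    unfolding test_fun_def by blast
  have "continuous_on (U \<union> - S)
      (\<lambda>z. if z \<in> U then of_real (frechet_derivative \<phi> (at z) v) * f z + of_real (\<phi> z) * Df z v else 0)"
  proof (rule continuous_on_open_Un[OF U])
    show "open (- S)"
      using S by blast
    show "continuous_on U
        (\<lambda>z. if z \<in> U then of_real (frechet_derivative \<phi> (at z) v) * f z + of_real (\<phi> z) * Df z v else 0)"
      using continuous_on_subset[OF cont_d\<phi>] continuous_on_subset[OF cont_\<phi>] cont_f cont_Df
      by (subst continuous_on_cong[OF refl, where g = "\<lambda>z. of_real (frechet_derivative \<phi> (at z) v) * f z + of_real (\<phi> z) * Df z v"])
        (auto intro!: continuous_intros)
    show "continuous_on (- S)
        (\<lambda>z. if z \<in> U then of_real (frechet_derivative \<phi> (at z) v) * f z + of_real (\<phi> z) * Df z v else 0)"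
    proof (rule continuous_on_eq[OF continuous_on_const[of _ 0]])
      fix z assume "z \<in> - S"
      then show "0 = (if z \<in> U then of_real (frechet_derivative \<phi> (at z) v) * f z + of_real (\<phi> z) * Df z v else 0)"
        using test_fun_vanishes_outside_support[OF \<phi>, of z] unfolding S_def by simp
    qed
  qed
  moreover have "U \<union> - S = UNIV"
    using S by auto
  ultimately show ?thesis
    by simp
qed

lemma test_fun_integration_by_parts:
  fixes f :: "complex \<Rightarrow> complex"
  assumes U: "open U" and \<phi>: "test_fun U \<phi>"
    and f: "\<And>z. z \<in> U \<Longrightarrow> (f has_derivative Df z) (at z)"
    and cont_Df: "continuous_on U (\<lambda>z. Df z v)"
    and cont_d\<phi>: "continuous_on UNIV (\<lambda>z. frechet_derivative \<phi> (at z) v)"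
  shows "(LINT z:U|lborel. of_real (frechet_derivative \<phi> (at z) v) * f z)
           = - (LINT z:U|lborel. of_real (\<phi> z) * Df z v)"
proof -
  define S where "S = closure {z. \<phi> z \<noteq> 0}"
  have S: "compact S" "S \<subseteq> U"
    using \<phi> unfolding test_fun_def S_def by auto
  have outside: "\<phi> z = 0" "frechet_derivative \<phi> (at z) v = 0" if "z \<notin> S" for z
    using test_fun_vanishes_outside_support[OF \<phi>, of z] that unfolding S_def by auto
  have cont_f: "continuous_on U f"
    using f has_derivative_continuous continuous_at_imp_continuous_on by blast
  have cont_\<phi>: "continuous_on UNIV \<phi>"
    using \<phi> differentiable_imp_continuous_within continuous_at_imp_continuous_on
    unfolding test_fun_def by blast
  have int1: "set_integrable lborel U (\<lambda>z. of_real (frechet_derivative \<phi> (at z) v) * f z)"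
    using S outside
    by (intro set_integrable_compact_support[OF S]
        continuous_intros continuous_on_subset[OF cont_d\<phi>] continuous_on_subset[OF cont_f]) auto
  have int2: "set_integrable lborel U (\<lambda>z. of_real (\<phi> z) * Df z v)"
    using S outside
    by (intro set_integrable_compact_support[OF S]
        continuous_intros continuous_on_subset[OF cont_\<phi>] continuous_on_subset[OF cont_Df]) auto
  define D\<psi> where "D\<psi> z h = (if z \<in> U then of_real (frechet_derivative \<phi> (at z) h) * f z + of_real (\<phi> z) * Df z h
                          else 0)" for z h
  have cont_UNIV: "continuous_on UNIV (\<lambda>z. D\<psi> z v)"
    unfolding D\<psi>_def by (rule continuous_on_test_fun_mult_derivative[where Df = Df, OF U \<phi> cont_f cont_Df cont_d\<phi>])
  have der: "((\<lambda>z. of_real (\<phi> z) * f z) has_derivative D\<psi> z) (at z)" for z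
    using has_derivative_test_fun_mult[OF U \<phi> f] by (simp add: D\<psi>_def[abs_def])
  have "integral\<^sup>L lborel (\<lambda>z. D\<psi> z v) = 0"
    by (rule integral_directional_derivative_eq_0[OF der cont_UNIV S(1)]) (simp add: outside)
  moreover have "(\<lambda>z. D\<psi> z v) = (\<lambda>z. indicator U z *\<^sub>R (of_real (frechet_derivative \<phi> (at z) v) * f z)
                                 + indicator U z *\<^sub>R (of_real (\<phi> z) * Df z v))"
    by (auto simp: fun_eq_iff D\<psi>_def indicator_def)
  ultimately show ?thesis
    using Bochner_Integration.integral_add[OF int1[unfolded set_integrable_def] int2[unfolded set_integrable_def]]
    unfolding set_lebesgue_integral_def by (simp add: eq_neg_iff_add_eq_0)
qed

lemma weak_partials_of_Wirtinger_derivatives: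
  fixes f a b :: "complex \<Rightarrow> complex"
  assumes U: "open U"
    and der: "\<And>z. z \<in> U \<Longrightarrow> (f has_derivative (\<lambda>h. a z * h + b z * cnj h)) (at z)"
    and a: "continuous_on U a" and b: "continuous_on U b"
  shows "weak_partials U f (\<lambda>z. a z + b z) (\<lambda>z. \<i> * (a z - b z))"
  unfolding weak_partials_def
proof (intro allI impI conjI)
  fix \<phi> assume \<phi>: "test_fun U \<phi>"
  have "continuous_on UNIV (\<lambda>z. frechet_derivative \<phi> (at z) 1)"
       "continuous_on UNIV (\<lambda>z. frechet_derivative \<phi> (at z) \<i>)"
    using \<phi> unfolding test_fun_def dx_def dy_def by auto
  moreover have "continuous_on U (\<lambda>z. a z * 1 + b z * cnj 1)"
                "continuous_on U (\<lambda>z. a z * \<i> + b z * cnj \<i>)"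
    using a b by (auto intro!: continuous_intros)
  ultimately show "(LINT z:U|lborel. of_real (dx \<phi> z) * f z) = - (LINT z:U|lborel. of_real (\<phi> z) * (a z + b z))"
    and "(LINT z:U|lborel. of_real (dy \<phi> z) * f z) = - (LINT z:U|lborel. of_real (\<phi> z) * (\<i> * (a z - b z)))"
    using test_fun_integration_by_parts[OF U \<phi> der] unfolding dx_def dy_def
    by (simp_all add: algebra_simps)
qed

lemma quasiconformal_onI:
  fixes f a b :: "complex \<Rightarrow> complex"
  assumes U: "open U" and K: "1 \<le> K" and hom: "homeomorphism U (f ` U) f g"
    and der: "\<And>z. z \<in> U \<Longrightarrow> (f has_derivative (\<lambda>h. a z * h + b z * cnj h)) (at z)"
    and a: "continuous_on U a" and b: "continuous_on U b"
    and dilatation: "\<And>z. z \<in> U \<Longrightarrow> cmod (b z) \<le> (K - 1) / (K + 1) * cmod (a z)"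
  shows "quasiconformal_on K U f"
  unfolding quasiconformal_on_def
proof (intro conjI exI)
  show "1 \<le> K" "open U" "homeomorphism U (f ` U) f g" by fact+
  show "L2_loc U f"
    using hom by (intro L2_loc_continuous_on[OF U]) (simp add: homeomorphism_def)
  show "weak_partials U f (\<lambda>z. a z + b z) (\<lambda>z. \<i> * (a z - b z))"
    by (rule weak_partials_of_Wirtinger_derivatives[OF U der a b])
  show "L2_loc U (\<lambda>z. a z + b z)" "L2_loc U (\<lambda>z. \<i> * (a z - b z))"
    using a b by (auto intro!: L2_loc_continuous_on[OF U] continuous_intros)
  have "(a z + b z + \<i> * (\<i> * (a z - b z))) / 2 = b z" "(a z + b z - \<i> * (\<i> * (a z - b z))) / 2 = a z" for z
    by (simp_all add: algebra_simps)
  then show "AE z in lborel. z \<in> U \<longrightarrow> cmod ((a z + b z + \<i> * (\<i> * (a z - b z))) / 2)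
               \<le> (K - 1) / (K + 1) * cmod ((a z + b z - \<i> * (\<i> * (a z - b z))) / 2)"
    using dilatation by simp
qed

lemma has_derivative_Wirtinger_compose:
  assumes A: "(A has_field_derivative A') (at z)"
    and f: "(f has_derivative (\<lambda>h. a * h + b * cnj h)) (at (A z))"
    and B: "(B has_field_derivative B') (at (f (A z)))"
  shows "((\<lambda>z. B (f (A z))) has_derivative (\<lambda>h. (B' * a * A') * h + (B' * b * cnj A') * cnj h)) (at z)"
proof -
  have "((\<lambda>z. f (A z)) has_derivative (\<lambda>h. a * (A' * h) + b * cnj (A' * h))) (at z)"
    using has_derivative_compose[OF A[unfolded has_field_derivative_def] f] by simp
  from has_derivative_compose[OF this B[unfolded has_field_derivative_def]] show ?thesis
    by (simp add: algebra_simps)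
qed

section \<open>Automorphisms of the disc\<close>

definition disc_aut :: "complex \<Rightarrow> complex \<Rightarrow> complex \<Rightarrow> complex" where
  "disc_aut a l z = l * (z - a) / (1 - cnj a * z)"

lemma disc_aut_denom_ge:
  assumes "cmod z \<le> 1"
  shows "1 - cmod a \<le> cmod (1 - cnj a * z)"
proof -
  have "cmod (cnj a * z) \<le> cmod a"
    using assms by (simp add: norm_mult mult_left_le)
  then show ?thesis
    using norm_triangle_ineq2[of 1 "cnj a * z"] by (simp add: norm_minus_commute)
qed

lemma disc_aut_denom_nonzero:
  assumes "cmod a < 1" "cmod z \<le> 1"
  shows "1 - cnj a * z \<noteq> 0"
  using disc_aut_denom_ge[OF assms(2), of a] assms(1) by auto

lemma one_minus_norm_disc_aut:
  assumes l: "cmod l = 1" and nz: "1 - cnj a * z \<noteq> 0"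
  shows "1 - (cmod (disc_aut a l z))\<^sup>2 = (1 - (cmod a)\<^sup>2) * (1 - (cmod z)\<^sup>2) / (cmod (1 - cnj a * z))\<^sup>2"
proof -
  have "(cmod (1 - cnj a * z))\<^sup>2 - (cmod (z - a))\<^sup>2 = (1 - (cmod a)\<^sup>2) * (1 - (cmod z)\<^sup>2)"
    unfolding cmod_power2 by (simp add: power2_eq_square algebra_simps)
  moreover have "(cmod (disc_aut a l z))\<^sup>2 = (cmod (z - a))\<^sup>2 / (cmod (1 - cnj a * z))\<^sup>2"
    using l by (simp add: disc_aut_def norm_divide norm_mult power_divide)
  ultimately show ?thesis
    using nz by (simp add: field_simps)
qed

lemma norm_disc_aut_le_1:
  assumes "cmod l = 1" "cmod a < 1" "cmod z \<le> 1"
  shows "cmod (disc_aut a l z) \<le> 1"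
proof -
  have "0 \<le> (1 - (cmod a)\<^sup>2) * (1 - (cmod z)\<^sup>2) / (cmod (1 - cnj a * z))\<^sup>2"
    using assms by (intro divide_nonneg_nonneg mult_nonneg_nonneg) (auto simp: abs_square_le_1 less_imp_le)
  then have "(cmod (disc_aut a l z))\<^sup>2 \<le> 1"
    using one_minus_norm_disc_aut[OF assms(1) disc_aut_denom_nonzero[OF assms(2,3)]] by linarith
  then show ?thesis
    by (simp add: abs_square_le_1)
qed

lemma norm_disc_aut_less_1:
  assumes "cmod l = 1" "cmod a < 1" "cmod z < 1"
  shows "cmod (disc_aut a l z) < 1"
proof -
  have nz: "1 - cnj a * z \<noteq> 0"
    using disc_aut_denom_nonzero assms by simp
  then have "0 < (1 - (cmod a)\<^sup>2) * (1 - (cmod z)\<^sup>2) / (cmod (1 - cnj a * z))\<^sup>2"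
    using assms by (intro divide_pos_pos mult_pos_pos) (auto simp: abs_square_less_1)
  then have "(cmod (disc_aut a l z))\<^sup>2 < 1"
    using one_minus_norm_disc_aut[OF assms(1) nz] by linarith
  then show ?thesis
    by (simp add: abs_square_less_1)
qed

lemma norm_disc_aut_eq_1:
  assumes "cmod l = 1" "cmod a < 1" "cmod z = 1"
  shows "cmod (disc_aut a l z) = 1"
proof -
  have "1 - cnj a * z \<noteq> 0"
    using disc_aut_denom_nonzero[OF assms(2)] assms(3) by simp
  from one_minus_norm_disc_aut[OF assms(1) this] assms(3)
  have "(cmod (disc_aut a l z))\<^sup>2 = 1" by simp
  then show ?thesis
    by (simp add: abs_square_eq_1)
qed

lemma disc_aut_inverse:
  assumes l: "cmod l = 1" and a: "cmod a < 1" and nz: "1 - cnj a * z \<noteq> 0"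
  shows "disc_aut (- (l * a)) (cnj l) (disc_aut a l z) = z"
proof -
  have ll: "cnj l * l = 1"
    using l complex_norm_square[of l] by (simp add: mult.commute)
  have aa: "1 - cnj a * a \<noteq> 0"
    using a complex_norm_square[of a] by (auto simp: mult.commute abs_square_eq_1 simp flip: of_real_power)
  define w where "w = disc_aut a l z"
  have num: "w + l * a = l * z * (1 - cnj a * a) / (1 - cnj a * z)"
    unfolding w_def disc_aut_def using nz by (simp add: field_simps)
  have "1 - cnj (- (l * a)) * w = (1 - cnj a * z + (cnj l * l) * (cnj a * (z - a))) / (1 - cnj a * z)"
    unfolding w_def disc_aut_def using nz by (simp add: field_simps)
  also have "\<dots> = (1 - cnj a * a) / (1 - cnj a * z)"
    unfolding ll by (simp add: algebra_simps)
  finally have den: "1 - cnj (- (l * a)) * w = (1 - cnj a * a) / (1 - cnj a * z)" .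
  have q: "(1 - cnj a * a) / (1 - cnj a * z) \<noteq> 0"
    using aa nz by simp
  have "disc_aut (- (l * a)) (cnj l) w = cnj l * (w + l * a) / (1 - cnj (- (l * a)) * w)"
    by (simp add: disc_aut_def)
  also have "\<dots> = (cnj l * l) * z * ((1 - cnj a * a) / (1 - cnj a * z)) / ((1 - cnj a * a) / (1 - cnj a * z))"
    unfolding num den by (simp add: algebra_simps)
  also have "\<dots> = z"
    using q by (simp add: ll)
  finally show ?thesis
    unfolding w_def .
qed

lemma disc_aut_homeomorphism:
  assumes l: "cmod l = 1" and a: "cmod a < 1"
  shows "homeomorphism (cball 0 1) (cball 0 1) (disc_aut a l) (disc_aut (- (l * a)) (cnj l))"
proof -
  have l': "cmod (cnj l) = 1" and a': "cmod (- (l * a)) < 1"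
    using l a by (auto simp: norm_mult)
  have inv: "cnj l * (l * a) = a"
    using l complex_norm_square[of l] by (simp add: algebra_simps)
  have cont: "continuous_on (cball 0 1) (disc_aut b k)" if "cmod b < 1" for b k
    unfolding disc_aut_def[abs_def] using disc_aut_denom_nonzero[OF that]
    by (intro continuous_intros) auto
  show ?thesis
  proof (rule homeomorphismI)
    show "disc_aut (- (l * a)) (cnj l) (disc_aut a l z) = z" if "z \<in> cball 0 1" for z
      using disc_aut_inverse[OF l a disc_aut_denom_nonzero[OF a]] that by simp
    show "disc_aut a l (disc_aut (- (l * a)) (cnj l) z) = z" if "z \<in> cball 0 1" for z
      using disc_aut_inverse[OF l' a' disc_aut_denom_nonzero[OF a']] that by (simp add: inv)
  qed (use cont a a' norm_disc_aut_le_1[OF l a] norm_disc_aut_le_1[OF l' a'] in auto)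
qed

definition disc_aut_deriv :: "complex \<Rightarrow> complex \<Rightarrow> complex \<Rightarrow> complex" where
  "disc_aut_deriv a l z = l * (1 - cnj a * a) / (1 - cnj a * z)\<^sup>2"

lemma disc_aut_has_field_derivative:
  assumes "1 - cnj a * z \<noteq> 0"
  shows "(disc_aut a l has_field_derivative disc_aut_deriv a l z) (at z)"
proof -
  have "(disc_aut a l has_field_derivative
          (l * (1 - cnj a * z) + l * (z - a) * cnj a) / ((1 - cnj a * z) * (1 - cnj a * z))) (at z)"
    unfolding disc_aut_def[abs_def] using assms by (auto intro!: derivative_eq_intros)
  then show ?thesis
    by (simp add: disc_aut_deriv_def algebra_simps power2_eq_square)
qed

lemma isCont_disc_aut_deriv: "1 - cnj a * z \<noteq> 0 \<Longrightarrow> isCont (disc_aut_deriv a l) z"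
  unfolding disc_aut_deriv_def[abs_def] by (auto intro!: continuous_intros)

definition hyp_translation :: "real \<Rightarrow> complex \<Rightarrow> complex" where
  "hyp_translation s z = (z + of_real s) / (1 + of_real s * z)"

lemma hyp_translation_eq_disc_aut: "hyp_translation s = disc_aut (- of_real s) 1"
  by (simp add: fun_eq_iff hyp_translation_def disc_aut_def)

lemma hyp_translation_denom_ge:
  assumes "\<bar>s\<bar> \<le> T" "cmod z \<le> 1"
  shows "1 - T \<le> cmod (1 + of_real s * z)"
  using disc_aut_denom_ge[OF assms(2), of "- of_real s"] assms(1) by simp

lemma hyp_translation_denom_nonzero:
  assumes "\<bar>s\<bar> < 1" "cmod z \<le> 1"
  shows "1 + of_real s * z \<noteq> 0"
  using hyp_translation_denom_ge[OF order_refl assms(2), of s] assms(1) by auto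

lemma norm_hyp_translation:
  assumes "\<bar>s\<bar> < 1"
  shows "cmod z \<le> 1 \<Longrightarrow> cmod (hyp_translation s z) \<le> 1"
    and "cmod z < 1 \<Longrightarrow> cmod (hyp_translation s z) < 1"
  using norm_disc_aut_le_1 norm_disc_aut_less_1 assms
  by (simp_all add: hyp_translation_eq_disc_aut)

lemma hyp_translation_inverse:
  assumes "\<bar>s\<bar> < 1" "cmod z \<le> 1"
  shows "hyp_translation (- s) (hyp_translation s z) = z"
  using disc_aut_inverse[of 1 "- of_real s" z] disc_aut_denom_nonzero[of "- of_real s" z] assms
  by (simp add: hyp_translation_eq_disc_aut)

lemma one_minus_sq_hyp_translation:
  assumes "1 + of_real s * z \<noteq> 0"
  shows "1 - (hyp_translation s z)\<^sup>2 = (1 - (of_real s)\<^sup>2) * (1 - z\<^sup>2) / (1 + of_real s * z)\<^sup>2"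
proof -
  have "(1 + of_real s * z)\<^sup>2 - (z + of_real s)\<^sup>2 = (1 - (of_real s)\<^sup>2) * (1 - z\<^sup>2)"
    by (simp add: power2_eq_square algebra_simps)
  then show ?thesis
    using assms by (simp add: hyp_translation_def power_divide field_simps)
qed

lemma hyp_translation_minus_endpoint:
  assumes "e\<^sup>2 = 1" "1 + of_real s * z \<noteq> 0"
  shows "hyp_translation s z - e = (1 - e * of_real s) * (z - e) / (1 + of_real s * z)"
  using assms by (simp add: hyp_translation_def field_simps power2_eq_square)

section \<open>The shear along a diameter\<close>

definition disc_gap :: "complex \<Rightarrow> real" where
  "disc_gap z = 1 - (Re z)\<^sup>2 - (Im z)\<^sup>2"

definition diam_gap :: "complex \<Rightarrow> real" where
  "diam_gap z = (disc_gap z)\<^sup>2 + 4 * (Im z)\<^sup>2"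

text \<open>\<open>diam_weight z\<close> is \<open>sech\<^sup>2\<close> of the hyperbolic distance from \<open>z\<close> to the diameter
  \<open>]-1, 1[\<close>.\<close>
definition diam_weight :: "complex \<Rightarrow> real" where
  "diam_weight z = (disc_gap z)\<^sup>2 / diam_gap z"

lemma disc_gap_eq: "disc_gap z = 1 - (cmod z)\<^sup>2"
  by (simp add: disc_gap_def cmod_power2)

lemma diam_gap_eq: "diam_gap z = (cmod (1 - z\<^sup>2))\<^sup>2"
  unfolding cmod_power2 by (simp add: diam_gap_def disc_gap_def power2_eq_square algebra_simps)

lemma diam_weight_eq: "diam_weight z = (1 - (cmod z)\<^sup>2)\<^sup>2 / (cmod (1 - z\<^sup>2))\<^sup>2"
  by (simp add: diam_weight_def disc_gap_eq diam_gap_eq)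

lemma disc_gap_pos: "cmod z < 1 \<Longrightarrow> 0 < disc_gap z"
  by (simp add: disc_gap_eq abs_square_less_1)

lemma diam_gap_pos: "cmod z < 1 \<Longrightarrow> 0 < diam_gap z"
  using disc_gap_pos[of z] by (simp add: diam_gap_def add_pos_nonneg)

lemma diam_gap_eq_0_iff: "diam_gap z = 0 \<longleftrightarrow> z\<^sup>2 = 1"
  by (simp add: diam_gap_eq)

lemma diam_weight_bounds: "0 \<le> diam_weight z" "diam_weight z \<le> 1"
proof -
  have le: "(disc_gap z)\<^sup>2 \<le> diam_gap z"
    by (simp add: diam_gap_def)
  moreover have "0 \<le> diam_gap z"
    using le zero_le_power2 order_trans by blast
  ultimately show "0 \<le> diam_weight z" "diam_weight z \<le> 1"
    by (auto simp: diam_weight_def divide_le_eq_1)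
qed

lemma diam_weight_0: "diam_weight 0 = 1"
  by (simp add: diam_weight_def diam_gap_def disc_gap_def)

lemma diam_weight_eq_0: "cmod z = 1 \<Longrightarrow> diam_weight z = 0"
  by (simp add: diam_weight_eq)

lemma diam_weight_hyp_translation:
  assumes s: "\<bar>s\<bar> < 1" and z: "cmod z \<le> 1"
  shows "diam_weight (hyp_translation s z) = diam_weight z"
proof -
  have nz: "1 + of_real s * z \<noteq> 0"
    by (rule hyp_translation_denom_nonzero[OF s z])
  define c where "c = (1 - s\<^sup>2) / (cmod (1 + of_real s * z))\<^sup>2"
  have c: "c \<noteq> 0"
    using s nz by (simp add: c_def abs_square_eq_1)
  have "1 - (cmod (hyp_translation s z))\<^sup>2 = c * (1 - (cmod z)\<^sup>2)"
    using one_minus_norm_disc_aut[of 1 "- of_real s" z] nz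
    by (simp add: hyp_translation_eq_disc_aut c_def)
  moreover have "cmod (1 - (of_real s)\<^sup>2) = 1 - s\<^sup>2"
    using s norm_of_real[of "1 - s\<^sup>2"] by (simp add: abs_square_less_1 less_imp_le)
  then have "cmod (1 - (hyp_translation s z)\<^sup>2) = c * cmod (1 - z\<^sup>2)"
    unfolding one_minus_sq_hyp_translation[OF nz] c_def by (simp add: norm_mult norm_divide norm_power)
  ultimately show ?thesis
    using c by (simp add: diam_weight_eq power_mult_distrib)
qed

text \<open>\<open>diam_weight_grad z = 2 \<partial>diam_weight/\<partial>z\<close>, so that the derivative of \<open>diam_weight\<close> at
  \<open>z\<close> is \<open>\<lambda>h. Re (diam_weight_grad z * h)\<close>.\<close>
definition diam_weight_grad :: "complex \<Rightarrow> complex" where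
  "diam_weight_grad z =
     of_real (-16 * Re z * (Im z)\<^sup>2 * disc_gap z / (diam_gap z)\<^sup>2)
     + \<i> * of_real (8 * Im z * disc_gap z * (disc_gap z + 2 * (Im z)\<^sup>2) / (diam_gap z)\<^sup>2)"

lemma disc_gap_has_derivative:
  "(disc_gap has_derivative (\<lambda>h. - 2 * Re z * Re h - 2 * Im z * Im h)) (at z)"
  unfolding disc_gap_def[abs_def]
  by (auto intro!: derivative_eq_intros simp: fun_eq_iff)

lemma diam_weight_has_derivative:
  assumes N: "diam_gap z \<noteq> 0"
  shows "(diam_weight has_derivative (\<lambda>h. Re (diam_weight_grad z * h))) (at z)"
proof -
  define P where "P = disc_gap z"
  define dP where "dP h = - 2 * Re z * Re h - 2 * Im z * Im h" for h
  have dP2: "((\<lambda>z. (disc_gap z)\<^sup>2) has_derivative (\<lambda>h. 2 * P * dP h)) (at z)"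
    using disc_gap_has_derivative[of z] unfolding P_def dP_def
    by (auto intro!: derivative_eq_intros simp: fun_eq_iff)
  have "((\<lambda>z. 4 * (Im z)\<^sup>2) has_derivative (\<lambda>h. 8 * Im z * Im h)) (at z)"
    by (auto intro!: derivative_eq_intros)
  from has_derivative_add[OF dP2 this]
  have dN: "(diam_gap has_derivative (\<lambda>h. 2 * P * dP h + 8 * Im z * Im h)) (at z)"
    unfolding diam_gap_def[abs_def] .
  have "(diam_weight has_derivative
          (\<lambda>h. (2 * P * dP h * diam_gap z - P\<^sup>2 * (2 * P * dP h + 8 * Im z * Im h)) / (diam_gap z * diam_gap z))) (at z)"
    using has_derivative_divide'[OF dP2 dN N] unfolding diam_weight_def[abs_def] P_def .
  moreover have "(2 * P * dP h * diam_gap z - P\<^sup>2 * (2 * P * dP h + 8 * Im z * Im h)) / (diam_gap z * diam_gap z)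
      = Re (diam_weight_grad z * h)" for h
  proof -
    have "2 * P * dP h * diam_gap z - P\<^sup>2 * (2 * P * dP h + 8 * Im z * Im h)
        = -16 * Re z * (Im z)\<^sup>2 * P * Re h - 8 * Im z * P * (P + 2 * (Im z)\<^sup>2) * Im h"
      by (simp add: diam_gap_def P_def[symmetric] dP_def power2_eq_square algebra_simps)
    then show ?thesis
      using N by (simp add: diam_weight_grad_def P_def power2_eq_square add_divide_distrib diff_divide_distrib)
  qed
  ultimately show ?thesis
    by simp
qed

lemma abs_Im_disc_gap_div_diam_gap_le_1: "\<bar>4 * Im z * disc_gap z / diam_gap z\<bar> \<le> 1"
proof -
  have "0 \<le> (\<bar>disc_gap z\<bar> - 2 * \<bar>Im z\<bar>)\<^sup>2"
    by simp
  then have "\<bar>4 * Im z * disc_gap z\<bar> \<le> diam_gap z"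
    by (simp add: diam_gap_def abs_mult power2_eq_square algebra_simps)
  moreover have "0 \<le> diam_gap z"
    by (simp add: diam_gap_def)
  ultimately show ?thesis
    by (auto simp: abs_divide divide_le_eq_1)
qed

lemma one_minus_sq_mult_diam_weight_grad:
  assumes N: "diam_gap z \<noteq> 0"
  shows "(1 - z\<^sup>2) * diam_weight_grad z / 2 = \<i> * of_real (4 * Im z * disc_gap z / diam_gap z)"
proof -
  define P where "P = disc_gap z"
  define N where "N = diam_gap z"
  have z2: "1 - z\<^sup>2 = of_real (P + 2 * (Im z)\<^sup>2) - \<i> * of_real (2 * Re z * Im z)"
    by (simp add: complex_eq_iff P_def disc_gap_def power2_eq_square)
  have grad: "diam_weight_grad z = of_real (-16 * Re z * (Im z)\<^sup>2 * P / N\<^sup>2)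
                                   + \<i> * of_real (8 * Im z * P * (P + 2 * (Im z)\<^sup>2) / N\<^sup>2)"
    by (simp add: diam_weight_grad_def P_def N_def)
  have "Im ((1 - z\<^sup>2) * diam_weight_grad z / 2)
      = 4 * Im z * P * ((P + 2 * (Im z)\<^sup>2)\<^sup>2 + 4 * (Re z)\<^sup>2 * (Im z)\<^sup>2) / N\<^sup>2"
    unfolding z2 grad using N by (simp add: N_def power2_eq_square field_simps)
  also have "(P + 2 * (Im z)\<^sup>2)\<^sup>2 + 4 * (Re z)\<^sup>2 * (Im z)\<^sup>2 = N"
    by (simp add: N_def P_def diam_gap_def disc_gap_def power2_eq_square algebra_simps)
  moreover have "Re ((1 - z\<^sup>2) * diam_weight_grad z / 2) = 0"
    unfolding z2 grad by (simp add: power2_eq_square field_simps)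
  ultimately show ?thesis
    using N by (simp add: complex_eq_iff P_def N_def power2_eq_square)
qed

definition shear_shift :: "real \<Rightarrow> complex \<Rightarrow> real" where
  "shear_shift D z = tanh (D * diam_weight z / 2)"

text \<open>\<open>shear D\<close> applies to \<open>z\<close> the hyperbolic translation along the diameter \<open>]-1, 1[\<close>
  of length \<open>D * diam_weight z\<close>. Since \<open>diam_weight\<close> is invariant under these translations,
  \<open>shear (- D)\<close> is its inverse.\<close>
definition shear :: "real \<Rightarrow> complex \<Rightarrow> complex" where
  "shear D z = hyp_translation (shear_shift D z) z"

lemma abs_shear_shift_less_1: "\<bar>shear_shift D z\<bar> < 1"
  using tanh_real_bounds[of "D * diam_weight z / 2"] by (auto simp: shear_shift_def)

lemma abs_shear_shift_le: "\<bar>shear_shift D z\<bar> \<le> tanh (\<bar>D\<bar> / 2)"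
proof -
  have "\<bar>D * diam_weight z / 2\<bar> \<le> \<bar>D\<bar> / 2"
    using diam_weight_bounds[of z] by (simp add: abs_mult mult_left_le)
  then have "tanh \<bar>D * diam_weight z / 2\<bar> \<le> tanh (\<bar>D\<bar> / 2)"
    by (rule tanh_real_le_iff[THEN iffD2])
  then show ?thesis
    by (simp only: shear_shift_def tanh_real_abs)
qed

lemma shear_shift_minus: "shear_shift (- D) z = - shear_shift D z"
  by (simp add: shear_shift_def)

lemma shear_shift_hyp_translation:
  "\<bar>s\<bar> < 1 \<Longrightarrow> cmod z \<le> 1 \<Longrightarrow> shear_shift D (hyp_translation s z) = shear_shift D z"
  by (simp add: shear_shift_def diam_weight_hyp_translation)

lemma shear_inverse:
  assumes "cmod z \<le> 1"
  shows "shear (- D) (shear D z) = z"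
  using assms abs_shear_shift_less_1[of D z]
  by (simp add: shear_def shear_shift_minus shear_shift_hyp_translation hyp_translation_inverse)

lemma norm_shear:
  shows "cmod z \<le> 1 \<Longrightarrow> cmod (shear D z) \<le> 1"
    and "cmod z < 1 \<Longrightarrow> cmod (shear D z) < 1"
  unfolding shear_def using norm_hyp_translation[OF abs_shear_shift_less_1] by auto

lemma shear_eq_on_circle: "cmod z = 1 \<Longrightarrow> shear D z = z"
  by (simp add: shear_def shear_shift_def diam_weight_eq_0 hyp_translation_def)

lemma shear_0: "shear D 0 = of_real (tanh (D / 2))"
  by (simp add: shear_def shear_shift_def hyp_translation_def diam_weight_0)

lemma norm_hyp_translation_minus_endpoint_le:
  assumes e: "e\<^sup>2 = 1" and s: "\<bar>s\<bar> \<le> T" "T < 1" and z: "cmod z \<le> 1"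
  shows "cmod (hyp_translation s z - e) \<le> 2 / (1 - T) * cmod (z - e)"
proof -
  have "cmod e = 1"
    using e by (metis norm_one norm_power abs_square_eq_1 abs_norm_cancel)
  then have "cmod (1 - e * of_real s) \<le> 2"
    using norm_triangle_ineq4[of 1 "e * of_real s"] s by (simp add: norm_mult)
  moreover have den: "1 - T \<le> cmod (1 + of_real s * z)"
    by (rule hyp_translation_denom_ge[OF s(1) z])
  moreover have "1 + of_real s * z \<noteq> 0"
    using den s(2) by auto
  ultimately have "cmod (1 - e * of_real s) * cmod (z - e) / cmod (1 + of_real s * z) \<le> 2 * cmod (z - e) / (1 - T)"
    using s(2) by (intro frac_le mult_right_mono) auto
  then show ?thesis
    unfolding hyp_translation_minus_endpoint[OF e \<open>1 + of_real s * z \<noteq> 0\<close>] by (simp add: norm_mult norm_divide)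
qed

lemma continuous_on_hyp_translation_cball:
  fixes \<sigma> :: "complex \<Rightarrow> real"
  assumes T: "T < 1" and \<sigma>_le: "\<And>z. cmod z \<le> 1 \<Longrightarrow> \<bar>\<sigma> z\<bar> \<le> T"
    and \<sigma>_cont: "\<And>z. z\<^sup>2 \<noteq> 1 \<Longrightarrow> isCont \<sigma> z"
  shows "continuous_on (cball 0 1) (\<lambda>z. hyp_translation (\<sigma> z) z)"
  unfolding continuous_on_eq_continuous_within
proof
  fix e :: complex assume e: "e \<in> cball 0 1"
  have nz: "1 + of_real (\<sigma> z) * z \<noteq> 0" if "cmod z \<le> 1" for z
    using hyp_translation_denom_ge[OF \<sigma>_le[OF that] that] T by auto
  show "continuous (at e within cball 0 1) (\<lambda>z. hyp_translation (\<sigma> z) z)"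
  proof (cases "e\<^sup>2 = 1")
    case False
    then have "isCont (\<lambda>z. hyp_translation (\<sigma> z) z) e"
      unfolding hyp_translation_def using \<sigma>_cont nz e by (intro continuous_intros) auto
    then show ?thesis
      using continuous_at_imp_continuous_within by blast
  next
    case True
    text \<open>\<open>\<sigma>\<close> may be discontinuous at \<open>\<plusminus>1\<close>, but these points are fixed by every
      translation, and all translations with \<open>\<bar>s\<bar> \<le> T\<close> are uniformly Lipschitz there.\<close>
    have "((\<lambda>z. hyp_translation (\<sigma> z) z - e) \<longlongrightarrow> 0) (at e within cball 0 1)"
    proof (rule Lim_null_comparison)
      show "\<forall>\<^sub>F z in at e within cball 0 1. cmod (hyp_translation (\<sigma> z) z - e) \<le> 2 / (1 - T) * cmod (z - e)"
        using norm_hyp_translation_minus_endpoint_le[OF True \<sigma>_le T] by (auto simp: eventually_at_filter)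
      show "((\<lambda>z. 2 / (1 - T) * cmod (z - e)) \<longlongrightarrow> 0) (at e within cball 0 1)"
        using T by (auto intro!: tendsto_eq_intros)
    qed
    moreover have "hyp_translation (\<sigma> e) e = e"
      using hyp_translation_minus_endpoint[OF True nz[of e]] e by simp
    ultimately show ?thesis
      unfolding continuous_within by (simp add: LIM_zero_iff)
  qed
qed

lemma isCont_shear_shift: "diam_gap z \<noteq> 0 \<Longrightarrow> isCont (shear_shift D) z"
  unfolding shear_shift_def[abs_def] diam_weight_def[abs_def] diam_gap_def disc_gap_def
  by (intro continuous_intros) auto

lemma shear_homeomorphism: "homeomorphism (cball 0 1) (cball 0 1) (shear D) (shear (- D))"
proof -
  have cont: "continuous_on (cball 0 1) (shear E)" for E
    unfolding shear_def[abs_def]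
    by (rule continuous_on_hyp_translation_cball[OF tanh_real_lt_1 abs_shear_shift_le isCont_shear_shift])
      (simp add: diam_gap_eq_0_iff)
  show ?thesis
    using cont norm_shear(1) shear_inverse shear_inverse[of _ "- D"]
    by (intro homeomorphismI) auto
qed

lemma shear_shift_has_derivative:
  assumes "diam_gap z \<noteq> 0"
  shows "(shear_shift D has_derivative
           (\<lambda>h. (1 - (shear_shift D z)\<^sup>2) * (D * Re (diam_weight_grad z * h) / 2))) (at z)"
proof -
  have "((\<lambda>z. D * diam_weight z / 2) has_derivative (\<lambda>h. D * Re (diam_weight_grad z * h) / 2)) (at z)"
    by (auto intro!: derivative_eq_intros diam_weight_has_derivative[OF assms])
  moreover have "((\<lambda>x. tanh x) has_field_derivative (1 - (tanh w)\<^sup>2) * 1) (at w)" for w :: real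
    by (rule has_field_derivative_tanh) (auto intro: DERIV_ident)
  then have "(tanh has_derivative (\<lambda>h. (1 - (tanh w)\<^sup>2) * h)) (at w)" for w :: real
    by (simp add: has_field_derivative_def)
  ultimately show ?thesis
    unfolding shear_shift_def[abs_def] by (rule has_derivative_compose)
qed

definition shear_dz :: "real \<Rightarrow> complex \<Rightarrow> complex" where
  "shear_dz D z = (1 - (of_real (shear_shift D z))\<^sup>2)
     * (1 + of_real (D / 2) * ((1 - z\<^sup>2) * diam_weight_grad z / 2)) / (1 + of_real (shear_shift D z) * z)\<^sup>2"

definition shear_dzbar :: "real \<Rightarrow> complex \<Rightarrow> complex" where
  "shear_dzbar D z = (1 - (of_real (shear_shift D z))\<^sup>2)
     * of_real (D / 2) * ((1 - z\<^sup>2) * cnj (diam_weight_grad z) / 2) / (1 + of_real (shear_shift D z) * z)\<^sup>2"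

lemma shear_has_derivative:
  assumes z: "cmod z < 1"
  shows "(shear D has_derivative (\<lambda>h. shear_dz D z * h + shear_dzbar D z * cnj h)) (at z)"
proof -
  define t where "t = complex_of_real (shear_shift D z)"
  define r where "r = diam_weight_grad z"
  define dt where "dt h = (1 - t\<^sup>2) * of_real (D / 2) * of_real (Re (r * h))" for h
  have E: "1 + t * z \<noteq> 0"
    unfolding t_def using hyp_translation_denom_nonzero[OF abs_shear_shift_less_1] z by simp
  have N: "diam_gap z \<noteq> 0"
    using diam_gap_pos[OF z] by simp
  have dt_eq: "dt = (\<lambda>h. of_real ((1 - (shear_shift D z)\<^sup>2) * (D * Re (r * h) / 2)))"
    by (simp add: fun_eq_iff dt_def t_def)
  have dt: "((\<lambda>z. of_real (shear_shift D z)) has_derivative dt) (at z)"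
    unfolding dt_eq r_def by (rule has_derivative_of_real[OF shear_shift_has_derivative[OF N]])
  have num: "((\<lambda>z. z + of_real (shear_shift D z)) has_derivative (\<lambda>h. h + dt h)) (at z)"
    by (rule has_derivative_add[OF has_derivative_ident dt])
  have den: "((\<lambda>z. 1 + of_real (shear_shift D z) * z) has_derivative (\<lambda>h. 0 + (t * h + dt h * z))) (at z)"
    unfolding t_def by (rule has_derivative_add[OF has_derivative_const has_derivative_mult[OF dt has_derivative_ident]])
  have "(shear D has_derivative
      (\<lambda>h. ((h + dt h) * (1 + t * z) - (z + t) * (0 + (t * h + dt h * z))) / ((1 + t * z) * (1 + t * z)))) (at z)"
    using has_derivative_divide'[OF num den E[unfolded t_def]]
    unfolding shear_def[abs_def] hyp_translation_def t_def .
  moreover have "((h + dt h) * (1 + t * z) - (z + t) * (0 + (t * h + dt h * z))) / ((1 + t * z) * (1 + t * z))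
      = shear_dz D z * h + shear_dzbar D z * cnj h" for h
  proof -
    have "(h + dt h) * (1 + t * z) - (z + t) * (0 + (t * h + dt h * z))
        = (1 - t\<^sup>2) * (1 + of_real (D / 2) * ((1 - z\<^sup>2) * r / 2)) * h
          + (1 - t\<^sup>2) * of_real (D / 2) * ((1 - z\<^sup>2) * cnj r / 2) * cnj h"
    proof -
      have "complex_of_real (Re (r * h)) = (r * h + cnj r * cnj h) / 2"
        by (simp add: complex_eq_iff)
      then show ?thesis
        by (simp add: dt_def field_simps power2_eq_square)
    qed
    then show ?thesis
      using E by (simp add: shear_dz_def shear_dzbar_def t_def r_def power2_eq_square add_divide_distrib)
  qed
  ultimately show ?thesis
    by simp
qed

lemma isCont_shear_dz: "cmod z < 1 \<Longrightarrow> isCont (shear_dz D) z"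
  and isCont_shear_dzbar: "cmod z < 1 \<Longrightarrow> isCont (shear_dzbar D) z"
proof -
  assume z: "cmod z < 1"
  have N: "diam_gap z \<noteq> 0"
    using diam_gap_pos[OF z] by simp
  have E: "1 + of_real (shear_shift D z) * z \<noteq> 0" "(1 + of_real (shear_shift D z) * z)\<^sup>2 \<noteq> 0"
    using hyp_translation_denom_nonzero[OF abs_shear_shift_less_1] z by simp_all
  have "isCont diam_weight_grad z"
    using N unfolding diam_weight_grad_def[abs_def] diam_gap_def disc_gap_def
    by (intro continuous_intros) auto
  then show "isCont (shear_dz D) z" "isCont (shear_dzbar D) z"
    unfolding shear_dz_def[abs_def] shear_dzbar_def[abs_def]
    by (auto intro!: continuous_intros isCont_shear_shift N simp: E)
qed

text \<open>The Beltrami quotient \<open>\<bar>s\<bar> / \<bar>1 + \<i> s\<bar>\<close> is at most \<open>\<bar>D\<bar> / sqrt (4 + D\<^sup>2)\<close>;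
  the weaker bound \<open>(2 + D\<^sup>2) / (4 + D\<^sup>2)\<close> is \<open>(K - 1) / (K + 1)\<close> for \<open>K = 3 + D\<^sup>2\<close>.\<close>
lemma abs_le_dilatation_bound:
  fixes s D :: real
  assumes "\<bar>s\<bar> \<le> \<bar>D\<bar> / 2"
  shows "\<bar>s\<bar> \<le> (2 + D\<^sup>2) / (4 + D\<^sup>2) * cmod (1 + \<i> * of_real s)"
proof -
  have "\<bar>2 * s\<bar> \<le> \<bar>D\<bar>"
    using assms by (simp add: abs_mult)
  then have "(2 * s)\<^sup>2 \<le> D\<^sup>2"
    by (simp only: abs_le_square_iff)
  then have "s\<^sup>2 * (12 + 4 * D\<^sup>2) \<le> D\<^sup>2 * (3 + D\<^sup>2)"
    using mult_right_mono[of "(2 * s)\<^sup>2" "D\<^sup>2" "3 + D\<^sup>2"] by (simp add: algebra_simps power_mult_distrib)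
  also have "\<dots> \<le> (2 + D\<^sup>2)\<^sup>2"
    by (simp add: power2_eq_square algebra_simps)
  finally have "s\<^sup>2 * (4 + D\<^sup>2)\<^sup>2 \<le> (2 + D\<^sup>2)\<^sup>2 * (1 + s\<^sup>2)"
    by (simp add: power2_eq_square algebra_simps)
  moreover have pos: "0 < 4 + D\<^sup>2"
    by (simp add: add_pos_nonneg)
  ultimately have "s\<^sup>2 \<le> ((2 + D\<^sup>2) / (4 + D\<^sup>2))\<^sup>2 * (1 + s\<^sup>2)"
    by (simp add: power_divide le_divide_eq)
  then have "sqrt (s\<^sup>2) \<le> sqrt (((2 + D\<^sup>2) / (4 + D\<^sup>2))\<^sup>2 * (1 + s\<^sup>2))"
    by (rule real_sqrt_le_mono)
  then show ?thesis
    using pos by (simp add: cmod_def real_sqrt_mult)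
qed

lemma shear_dilatation:
  assumes z: "cmod z < 1"
  shows "cmod (shear_dzbar D z) \<le> ((3 + D\<^sup>2) - 1) / ((3 + D\<^sup>2) + 1) * cmod (shear_dz D z)"
proof -
  define q where "q = 4 * Im z * disc_gap z / diam_gap z"
  define A where "A = (1 - (of_real (shear_shift D z))\<^sup>2) / (1 + of_real (shear_shift D z) * z)\<^sup>2"
  have w: "(1 - z\<^sup>2) * diam_weight_grad z / 2 = \<i> * of_real q"
    unfolding q_def using one_minus_sq_mult_diam_weight_grad diam_gap_pos[OF z] by simp
  have "cmod ((1 - z\<^sup>2) * cnj (diam_weight_grad z) / 2) = cmod ((1 - z\<^sup>2) * diam_weight_grad z / 2)"
    by (simp add: norm_mult norm_divide)
  also have "\<dots> = \<bar>q\<bar>"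
    unfolding w by (simp add: norm_mult)
  finally have wc: "cmod ((1 - z\<^sup>2) * cnj (diam_weight_grad z) / 2) = \<bar>q\<bar>" .
  have "shear_dzbar D z = A * (of_real (D / 2) * ((1 - z\<^sup>2) * cnj (diam_weight_grad z) / 2))"
    unfolding shear_dzbar_def A_def by (simp add: field_simps)
  then have "cmod (shear_dzbar D z) = cmod A * \<bar>D / 2 * q\<bar>"
    by (simp only: norm_mult wc norm_of_real abs_mult)
  also have "\<dots> \<le> cmod A * ((2 + D\<^sup>2) / (4 + D\<^sup>2) * cmod (1 + \<i> * of_real (D / 2 * q)))"
  proof (intro mult_left_mono abs_le_dilatation_bound)
    have "\<bar>q\<bar> \<le> 1"
      unfolding q_def by (rule abs_Im_disc_gap_div_diam_gap_le_1)
    then show "\<bar>D / 2 * q\<bar> \<le> \<bar>D\<bar> / 2"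
      by (simp add: abs_mult mult_left_le)
  qed simp
  also have "\<dots> = (2 + D\<^sup>2) / (4 + D\<^sup>2) * cmod (shear_dz D z)"
    unfolding shear_dz_def w A_def by (simp add: norm_mult norm_divide mult.left_commute)
  finally show ?thesis
    by simp
qed

lemma isCont_shear_compose:
  assumes "isCont A z" and "cmod (A z) < 1"
  shows "isCont (\<lambda>z. shear D (A z)) z" "isCont (\<lambda>z. shear_dz D (A z)) z" "isCont (\<lambda>z. shear_dzbar D (A z)) z"
  using isCont_o2[OF assms(1) has_derivative_continuous[OF shear_has_derivative[OF assms(2)]]]
    isCont_o2[OF assms(1) isCont_shear_dz[OF assms(2)]] isCont_o2[OF assms(1) isCont_shear_dzbar[OF assms(2)]]
  by auto

section \<open>Moving a point of the disc\<close>

lemma homeomorphism_conj_shear: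
  assumes "cmod l = 1" and "cmod a < 1"
  shows "homeomorphism (cball 0 1) (cball 0 1)
           (\<lambda>z. disc_aut (- (l * a)) (cnj l) (shear D (disc_aut a l z)))
           (\<lambda>z. disc_aut (- (l * a)) (cnj l) (shear (- D) (disc_aut a l z)))"
  using homeomorphism_compose[OF homeomorphism_compose[OF disc_aut_homeomorphism[OF assms] shear_homeomorphism]
      homeomorphism_symD[OF disc_aut_homeomorphism[OF assms]], of D]
  by (simp add: o_def)

lemma quasiconformal_on_conj_shear:
  assumes l: "cmod l = 1" and a: "cmod a < 1"
  shows "quasiconformal_on (3 + D\<^sup>2) (ball 0 1) (\<lambda>z. disc_aut (- (l * a)) (cnj l) (shear D (disc_aut a l z)))"
proof -
  define A where "A = disc_aut a l"
  define B where "B = disc_aut (- (l * a)) (cnj l)"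
  define B' where "B' = disc_aut_deriv (- (l * a)) (cnj l)"
  have a': "cmod (- (l * a)) < 1"
    using l a by (simp add: norm_mult)
  have Az: "cmod (A z) < 1" if "z \<in> ball 0 1" for z
    using norm_disc_aut_less_1[OF l a] that by (simp add: A_def)
  have nzA: "1 - cnj a * z \<noteq> 0" if "z \<in> ball 0 1" for z
    using disc_aut_denom_nonzero[OF a] that by simp
  have nzB: "1 - cnj (- (l * a)) * shear D (A z) \<noteq> 0" if "z \<in> ball 0 1" for z
    using disc_aut_denom_nonzero[OF a' less_imp_le[OF norm_shear(2)[OF Az[OF that]]]] .
  have hom: "homeomorphism (ball 0 1) ((\<lambda>z. B (shear D (A z))) ` ball 0 1)
               (\<lambda>z. B (shear D (A z))) (\<lambda>z. B (shear (- D) (A z)))"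
    using homeomorphism_conj_shear[OF l a] unfolding A_def B_def
    by (rule homeomorphism_of_subsets[OF _ ball_subset_cball order_refl refl])
  have "quasiconformal_on (3 + D\<^sup>2) (ball 0 1) (\<lambda>z. B (shear D (A z)))"
  proof (rule quasiconformal_onI[OF open_ball _ hom])
    fix z :: complex assume z: "z \<in> ball 0 1"
    show "((\<lambda>z. B (shear D (A z))) has_derivative
           (\<lambda>h. (B' (shear D (A z)) * shear_dz D (A z) * disc_aut_deriv a l z) * h
                + (B' (shear D (A z)) * shear_dzbar D (A z) * cnj (disc_aut_deriv a l z)) * cnj h)) (at z)"
      unfolding A_def B_def B'_def
      by (intro has_derivative_Wirtinger_compose disc_aut_has_field_derivative shear_has_derivative)
        (use z Az[OF z] nzA[OF z] nzB[OF z] in \<open>simp_all add: A_def\<close>)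
    show "cmod (B' (shear D (A z)) * shear_dzbar D (A z) * cnj (disc_aut_deriv a l z))
          \<le> (3 + D\<^sup>2 - 1) / (3 + D\<^sup>2 + 1) * cmod (B' (shear D (A z)) * shear_dz D (A z) * disc_aut_deriv a l z)"
      using mult_right_mono[OF shear_dilatation[OF Az[OF z]],
          of "cmod (B' (shear D (A z))) * cmod (disc_aut_deriv a l z)" D]
      by (simp add: norm_mult ac_simps)
  next
    have "isCont (\<lambda>z. B' (shear D (A z))) z" "isCont (\<lambda>z. shear_dz D (A z)) z"
      "isCont (\<lambda>z. shear_dzbar D (A z)) z" if z: "z \<in> ball 0 1" for z
    proof -
      have "isCont A z"
        unfolding A_def using disc_aut_has_field_derivative[OF nzA[OF z]] by (rule DERIV_isCont)
      from isCont_shear_compose[OF this Az[OF z]]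
      show "isCont (\<lambda>z. B' (shear D (A z))) z" "isCont (\<lambda>z. shear_dz D (A z)) z"
        "isCont (\<lambda>z. shear_dzbar D (A z)) z"
        unfolding B'_def using isCont_o2 isCont_disc_aut_deriv[OF nzB[OF z]] by blast+
    qed
    then show "continuous_on (ball 0 1) (\<lambda>z. B' (shear D (A z)) * shear_dz D (A z) * disc_aut_deriv a l z)"
      "continuous_on (ball 0 1) (\<lambda>z. B' (shear D (A z)) * shear_dzbar D (A z) * cnj (disc_aut_deriv a l z))"
      using isCont_disc_aut_deriv nzA
      by (auto intro!: continuous_at_imp_continuous_on continuous_intros)
  qed simp
  then show ?thesis
    by (simp add: A_def B_def)
qed

lemma tanh_artanh_real:
  fixes t :: real
  assumes "\<bar>t\<bar> < 1"
  shows "tanh (artanh t) = t"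
proof -
  define u where "u = (1 + t) / (1 - t)"
  have u: "0 < u"
    using assms by (simp add: u_def)
  then have "artanh t = ln (sqrt u)"
    by (simp add: artanh_def u_def ln_sqrt)
  then have "tanh (artanh t) = (u - 1) / (u + 1)"
    using u by (simp add: tanh_ln_real)
  also have "\<dots> = t"
    using assms by (simp add: u_def field_simps)
  finally show ?thesis .
qed

lemma exists_quasiconformal_moving_point:
  assumes x: "cmod x < 1" and y: "cmod y < 1"
  shows "\<exists>f g. homeomorphism (cball 0 1) (cball 0 1) f g \<and> (\<forall>z. cmod z = 1 \<longrightarrow> f z = z)
           \<and> quasiconformal_on (3 + (2 * artanh (cmod (disc_aut x 1 y)))\<^sup>2) (ball 0 1) f \<and> f x = y"
proof -
  define b where "b = disc_aut x 1 y"
  define t where "t = cmod b"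
  define l where "l = (if b = 0 then 1 else cnj b / of_real t)"
  have l: "cmod l = 1"
    by (simp add: l_def t_def norm_divide)
  have "disc_aut x l y = l * b"
    by (simp add: disc_aut_def b_def)
  also have "\<dots> = of_real t"
  proof (cases "b = 0")
    case False
    then have "cnj b * b / of_real t = of_real t * of_real t / of_real t"
      using complex_norm_square[of b] by (simp add: t_def power2_eq_square mult.commute)
    then show ?thesis
      using False by (simp add: l_def t_def)
  qed (simp add: l_def t_def)
  finally have Ay: "disc_aut x l y = of_real t" .
  have "t < 1"
    unfolding t_def b_def using norm_disc_aut_less_1[of 1 x y] x y by simp
  then have "shear (2 * artanh t) (disc_aut x l x) = disc_aut x l y"
    unfolding Ay by (simp add: disc_aut_def shear_0 tanh_artanh_real t_def)
  then have "disc_aut (- (l * x)) (cnj l) (shear (2 * artanh t) (disc_aut x l x)) = y"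
    using disc_aut_inverse[OF l x disc_aut_denom_nonzero[OF x]] y by simp
  moreover have "disc_aut (- (l * x)) (cnj l) (shear D (disc_aut x l z)) = z" if "cmod z = 1" for z D
    using that shear_eq_on_circle[OF norm_disc_aut_eq_1[OF l x that]]
      disc_aut_inverse[OF l x disc_aut_denom_nonzero[OF x]] by simp
  ultimately show ?thesis
    using homeomorphism_conj_shear[OF l x] quasiconformal_on_conj_shear[OF l x]
    unfolding t_def b_def by blast
qed

lemma one_minus_norm_disc_aut_ge:
  assumes "0 < \<delta>" and x: "cmod x \<le> 1 - \<delta>" and y: "cmod y \<le> 1 - \<delta>"
  shows "\<delta>\<^sup>2 / 4 \<le> 1 - (cmod (disc_aut x 1 y))\<^sup>2"
proof -
  have gap: "\<delta> \<le> 1 - (cmod w)\<^sup>2" if "cmod w \<le> 1 - \<delta>" for w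
    using that assms(1) mult_left_le_one_le[of "cmod w" "cmod w"] by (simp add: power2_eq_square)
  have x1: "cmod x < 1"
    using x assms(1) by simp
  have nz: "1 - cnj x * y \<noteq> 0"
    using disc_aut_denom_nonzero[OF x1] y assms(1) by simp
  have "cmod (1 - cnj x * y) \<le> 1 + cmod x * cmod y"
    using norm_triangle_ineq4[of 1 "cnj x * y"] by (simp add: norm_mult)
  also have "\<dots> \<le> 2"
    using x y assms(1) mult_le_one[of "cmod x" "cmod y"] by simp
  finally have "(cmod (1 - cnj x * y))\<^sup>2 \<le> 2\<^sup>2"
    by (rule power_mono) simp
  moreover have "\<delta>\<^sup>2 \<le> (1 - (cmod x)\<^sup>2) * (1 - (cmod y)\<^sup>2)"
    unfolding power2_eq_square[of \<delta>] using gap[OF x] gap[OF y] assms(1) by (intro mult_mono) auto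
  moreover have "0 \<le> (1 - (cmod x)\<^sup>2) * (1 - (cmod y)\<^sup>2)"
    using gap[OF x] gap[OF y] assms(1) by simp
  ultimately have "\<delta>\<^sup>2 / 4 \<le> (1 - (cmod x)\<^sup>2) * (1 - (cmod y)\<^sup>2) / (cmod (1 - cnj x * y))\<^sup>2"
    using nz by (intro frac_le) auto
  then show ?thesis
    using one_minus_norm_disc_aut[of 1 x y] nz by simp
qed

lemma two_artanh_bound:
  fixes \<delta> t :: real
  assumes \<delta>: "0 < \<delta>" "\<delta> < 1/2" and t: "0 \<le> t" "t < 1" and gap: "\<delta>\<^sup>2 / 4 \<le> 1 - t\<^sup>2"
  shows "3 + (2 * artanh t)\<^sup>2 \<le> 48 * (ln \<delta>)\<^sup>2"
proof -
  define L where "L = - ln \<delta>"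
  have "(1 + t) / (1 - t) = ((1 + t) * (1 + t)) / ((1 - t) * (1 + t))"
    using t by simp
  also have "\<dots> = (1 + t)\<^sup>2 / (1 - t\<^sup>2)"
    by (simp add: power2_eq_square algebra_simps)
  also have "\<dots> \<le> 2\<^sup>2 / (\<delta>\<^sup>2 / 4)"
    using t gap \<delta> by (intro frac_le power_mono) auto
  also have "\<dots> = 1 / \<delta> ^ 6 * (16 * \<delta> ^ 4)"
    using \<delta> by (simp add: field_simps power2_eq_square eval_nat_numeral)
  also have "\<dots> \<le> 1 / \<delta> ^ 6"
    using \<delta> power_strict_mono[of \<delta> "1/2" 4] by (intro mult_left_le) (auto simp: power_divide)
  finally have "ln ((1 + t) / (1 - t)) \<le> ln (1 / \<delta> ^ 6)"
    using t \<delta> by (subst ln_le_cancel_iff) auto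
  then have "2 * artanh t \<le> ln (1 / \<delta> ^ 6)"
    by (simp add: artanh_def)
  also have "\<dots> = 6 * L"
    using \<delta> by (simp add: L_def ln_div ln_realpow)
  finally have le: "2 * artanh t \<le> 6 * L" .
  have "0 \<le> 2 * artanh t"
    using t by (simp add: artanh_def)
  then have "(2 * artanh t)\<^sup>2 \<le> (6 * L)\<^sup>2"
    using le by (rule power_mono[rotated])
  moreover have "1 / 2 \<le> L"
    using ln_le_minus_one[OF \<delta>(1)] \<delta> by (simp add: L_def)
  then have "(1 / 2)\<^sup>2 \<le> L\<^sup>2"
    by (rule power_mono) simp
  then have "3 \<le> 12 * L\<^sup>2"
    by (simp add: power_divide)
  ultimately show ?thesis
    by (simp add: L_def power_mult_distrib)
qed

theorem corollary3p12:
  shows "\<exists>C::real. \<forall>\<delta>::real. \<forall>x y :: complex.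
           0 < \<delta> \<and> \<delta> < 1/2 \<and> x \<in> cball 0 (1 - \<delta>) \<and> y \<in> cball 0 (1 - \<delta>) \<longrightarrow>
           (\<exists>f K. (\<exists>g. homeomorphism (cball 0 1) (cball 0 1) f g) \<and>
                  (\<forall>z. cmod z = 1 \<longrightarrow> f z = z) \<and>
                  quasiconformal_on K (ball 0 1) f \<and>
                  K \<le> C * (ln \<delta>)\<^sup>2 \<and>
                  f x = y)"
proof (intro exI[of _ 48] allI impI)
  fix \<delta> :: real and x y :: complex
  assume "0 < \<delta> \<and> \<delta> < 1/2 \<and> x \<in> cball 0 (1 - \<delta>) \<and> y \<in> cball 0 (1 - \<delta>)"
  then have \<delta>: "0 < \<delta>" "\<delta> < 1/2" and x: "cmod x \<le> 1 - \<delta>" and y: "cmod y \<le> 1 - \<delta>"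
    by auto
  define t where "t = cmod (disc_aut x 1 y)"
  have "t < 1"
    unfolding t_def using norm_disc_aut_less_1[of 1 x y] x y \<delta> by simp
  then have K: "3 + (2 * artanh t)\<^sup>2 \<le> 48 * (ln \<delta>)\<^sup>2"
    using two_artanh_bound[OF \<delta> _ _ one_minus_norm_disc_aut_ge[OF \<delta>(1) x y]] by (simp add: t_def)
  obtain f g where "homeomorphism (cball 0 1) (cball 0 1) f g" "\<forall>z. cmod z = 1 \<longrightarrow> f z = z"
    "quasiconformal_on (3 + (2 * artanh t)\<^sup>2) (ball 0 1) f" "f x = y"
    using exists_quasiconformal_moving_point[of x y] x y \<delta> unfolding t_def by auto
  with K show "\<exists>f K. (\<exists>g. homeomorphism (cball 0 1) (cball 0 1) f g) \<and> (\<forall>z. cmod z = 1 \<longrightarrow> f z = z) \<and>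
      quasiconformal_on K (ball 0 1) f \<and> K \<le> 48 * (ln \<delta>)\<^sup>2 \<and> f x = y"
    by blast
qed

end
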